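(* Let $|\psi\rangle=\sum_jc_j|\phi_j\rangle$ be a normalized $n$-qubit state where the $|\phi_j\rangle$ are stabilizer states, and let $k\ge1$ be an integer. Then one can sample from an ensemble $\rho_1$ such that every sampled pure state has stabilizer rank at most $k$ and $$\|\rho_1-|\psi\rangle\langle\psi|\|_1\le\frac{2\|c\|_1^2}{k}+\sqrt{\mathrm{Var}[\langle\Omega|\Omega\rangle]},$$ where $|\Omega\rangle$ is the random sparsified vector defined below.
   Context: Sparsification: let $|\omega_1\rangle,\dots,|\omega_k\rangle$ be i.i.d. random vectors with $|\omega_\alpha\rangle=(c_j/|c_j|)|\phi_j\rangle$ with probability $|c_j|/\|c\|_1$, and $|\Omega\rangle=\frac{\|c\|_1}{k}\sum_{\alpha=1}^k|\omega_\alpha\rangle$. The ensemble is $\rho_1=\mathbb E\big[|\Omega\rangle\langle\Omega|/\langle\Omega|\Omega\rangle\big]$, sampled by drawing $|\Omega\rangle$ and normalizing. The stabilizer rank of a vector is the minimal number of stabilizer states in a linear decomposition of it. *)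

theory Defs
  imports "Jordan_Normal_Form.Schur_Decomposition"
begin

text \<open>n-qubit vectors are complex vectors of dimension 2^n (computational basis
  indexed by 0..2^n-1, bit i of the index = value of qubit i).\<close>

definition qdim :: "nat \<Rightarrow> nat" where "qdim n = 2 ^ n"

text \<open>Pauli operator  i^m X^a Z^b  on n qubits, a b bit-strings encoded as naturals < 2^n:
  (X^a Z^b) |x> = (-1)^(b.x) |x xor a>.\<close>
definition pauli_op :: "nat \<Rightarrow> nat \<Rightarrow> nat \<Rightarrow> nat \<Rightarrow> complex mat" where
  "pauli_op n m a b = mat (qdim n) (qdim n)
     (\<lambda>(r, s). if r = xor s a
               then \<i> ^ m * (-1) ^ card {i. i < n \<and> bit b i \<and> bit s i} else 0)"

definition pauli_group :: "nat \<Rightarrow> complex mat set" where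
  "pauli_group n = {pauli_op n m a b | m a b. m < 4 \<and> a < qdim n \<and> b < qdim n}"

definition vnorm :: "complex vec \<Rightarrow> real" where
  "vnorm v = sqrt (\<Sum>i<dim_vec v. (cmod (v $ i))\<^sup>2)"

definition stabilizer_state :: "nat \<Rightarrow> complex vec \<Rightarrow> bool" where
  "stabilizer_state n v \<longleftrightarrow> v \<in> carrier_vec (qdim n) \<and> vnorm v = 1 \<and>
     (\<exists>S. S \<subseteq> pauli_group n \<and> card S = 2 ^ n \<and> (\<forall>P\<in>S. P *\<^sub>v v = v))"

definition stabilizer_rank :: "nat \<Rightarrow> complex vec \<Rightarrow> nat" where
  "stabilizer_rank n v = (LEAST r. \<exists>(a :: nat \<Rightarrow> complex) (\<phi> :: nat \<Rightarrow> complex vec).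
      (\<forall>j<r. stabilizer_state n (\<phi> j)) \<and>
      v = vec (qdim n) (\<lambda>i. \<Sum>j<r. a j * \<phi> j $ i))"

definition outer :: "complex vec \<Rightarrow> complex vec \<Rightarrow> complex mat" where
  "outer u v = mat (dim_vec u) (dim_vec v) (\<lambda>(r, s). u $ r * cnj (v $ s))"

text \<open>Schatten 1-norm: sum of singular values, i.e. of square roots of the eigenvalues
  (with algebraic multiplicity) of A^H A.\<close>
definition trace_norm :: "complex mat \<Rightarrow> real" where
  "trace_norm A = (let p = char_poly (mat_adjoint A * A) in
     \<Sum>z\<in>{z. poly p z = 0}. real (order z p) * sqrt (Re z))"

definition l1_norm :: "(nat \<Rightarrow> complex) \<Rightarrow> nat \<Rightarrow> real" where
  "l1_norm c m = (\<Sum>j<m. cmod (c j))"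

text \<open>Outcomes of the k i.i.d. draws (j_1,...,j_k), each j in {0..<m}.\<close>
definition samples :: "nat \<Rightarrow> nat \<Rightarrow> nat list set" where
  "samples m k = {js. length js = k \<and> set js \<subseteq> {..<m}}"

definition sample_prob :: "(nat \<Rightarrow> complex) \<Rightarrow> nat \<Rightarrow> nat list \<Rightarrow> real" where
  "sample_prob c m js = (\<Prod>\<alpha><length js. cmod (c (js ! \<alpha>)) / l1_norm c m)"

definition Omega :: "nat \<Rightarrow> (nat \<Rightarrow> complex) \<Rightarrow> (nat \<Rightarrow> complex vec) \<Rightarrow> nat \<Rightarrow> nat list
    \<Rightarrow> complex vec" where
  "Omega n c \<phi> m js = vec (qdim n) (\<lambda>i. complex_of_real (l1_norm c m / real (length js)) *
      (\<Sum>\<alpha><length js. (c (js ! \<alpha>) / complex_of_real (cmod (c (js ! \<alpha>)))) * \<phi> (js ! \<alpha>) $ i))"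

definition expect :: "(nat \<Rightarrow> complex) \<Rightarrow> nat \<Rightarrow> nat \<Rightarrow> (nat list \<Rightarrow> real) \<Rightarrow> real" where
  "expect c m k f = (\<Sum>js\<in>samples m k. sample_prob c m js * f js)"

definition var_norm2 :: "nat \<Rightarrow> (nat \<Rightarrow> complex) \<Rightarrow> (nat \<Rightarrow> complex vec) \<Rightarrow> nat \<Rightarrow> nat \<Rightarrow> real" where
  "var_norm2 n c \<phi> m k =
     expect c m k (\<lambda>js. ((vnorm (Omega n c \<phi> m js))\<^sup>2 - expect c m k (\<lambda>js'. (vnorm (Omega n c \<phi> m js'))\<^sup>2))\<^sup>2)"

definition sampled_state :: "nat \<Rightarrow> (nat \<Rightarrow> complex) \<Rightarrow> (nat \<Rightarrow> complex vec) \<Rightarrow> nat \<Rightarrow> nat list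
    \<Rightarrow> complex vec" where
  "sampled_state n c \<phi> m js = complex_of_real (1 / vnorm (Omega n c \<phi> m js)) \<cdot>\<^sub>v Omega n c \<phi> m js"

definition rho1 :: "nat \<Rightarrow> (nat \<Rightarrow> complex) \<Rightarrow> (nat \<Rightarrow> complex vec) \<Rightarrow> nat \<Rightarrow> nat \<Rightarrow> complex mat" where
  "rho1 n c \<phi> m k = mat (qdim n) (qdim n) (\<lambda>(r, s).
     \<Sum>js\<in>samples m k. complex_of_real (sample_prob c m js) *
        (sampled_state n c \<phi> m js $ r * cnj (sampled_state n c \<phi> m js $ s)))"

end

theory Submission
  imports Defs "Jordan_Normal_Form.Jordan_Normal_Form_Uniqueness"
    "Jordan_Normal_Form.Jordan_Normal_Form_Existence"
begin

text \<open>
  A sampled state is by construction a combination of the \<open>k\<close> drawn stabilizer states.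
  For the trace norm, \<open>D = \<rho>\<^sub>1 - |\<psi>\<rangle>\<langle>\<psi>|\<close> is Hermitian, so \<open>\<parallel>D\<parallel>\<^sub>1 = tr (D S)\<close>
  for the sign \<open>S\<close> of \<open>D\<close>, a Hermitian involution, which satisfies
  \<open>|\<langle>u|S|u\<rangle>| \<le> \<langle>u|u\<rangle>\<close>. With \<open>X = \<langle>\<Omega>|\<Omega>\<rangle>\<close> we have
  \<open>tr (D S) = E[\<langle>\<Omega>|S|\<Omega>\<rangle> / X] - \<langle>\<psi>|S|\<psi>\<rangle>\<close>. Replacing \<open>1 / X\<close> by \<open>1\<close> costs at
  most \<open>E|X - 1| \<le> \<surd>Var X + (E X - 1)\<close>, and the second moment
  \<open>E |\<Omega>\<rangle>\<langle>\<Omega>| = (1 - 1/k) |\<psi>\<rangle>\<langle>\<psi>| + (\<parallel>c\<parallel>\<^sub>1 / k) \<Sum>\<^sub>j |c\<^sub>j| |\<phi>\<^sub>j\<rangle>\<langle>\<phi>\<^sub>j|\<close>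
  gives \<open>E X - 1 = (\<parallel>c\<parallel>\<^sub>1\<^sup>2 - 1) / k\<close> and
  \<open>E \<langle>\<Omega>|S|\<Omega>\<rangle> - \<langle>\<psi>|S|\<psi>\<rangle> \<le> (1 + \<parallel>c\<parallel>\<^sub>1\<^sup>2) / k\<close>.
  The sign of \<open>D\<close> is read off a Jordan normal form of \<open>D\<close>, whose blocks are all \<open>1 \<times> 1\<close>
  with real entries.
\<close>

section \<open>Hermitian matrices\<close>

lemma mat_adjoint_dim [simp]:
  "dim_row (mat_adjoint A) = dim_col A" "dim_col (mat_adjoint A) = dim_row A"
  by (simp_all add: mat_adjoint_def)

lemma mat_adjoint_carrier [simp]: "A \<in> carrier_mat n m \<Longrightarrow> mat_adjoint A \<in> carrier_mat m n"
  by (intro carrier_matI) simp_all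

lemma mat_adjoint_index [simp]:
  "i < dim_col A \<Longrightarrow> j < dim_row A \<Longrightarrow> mat_adjoint (A :: complex mat) $$ (i, j) = cnj (A $$ (j, i))"
  by (simp add: mat_adjoint_def mat_of_rows_index)

lemma mat_adjoint_mult:
  fixes A B :: "complex mat"
  assumes "A \<in> carrier_mat n m" "B \<in> carrier_mat m p"
  shows "mat_adjoint (A * B) = mat_adjoint B * mat_adjoint A"
proof (rule eq_matI)
  fix i j assume "i < dim_row (mat_adjoint B * mat_adjoint A)" "j < dim_col (mat_adjoint B * mat_adjoint A)"
  then show "mat_adjoint (A * B) $$ (i, j) = (mat_adjoint B * mat_adjoint A) $$ (i, j)"
    using assms by (simp add: scalar_prod_def row_def col_def mult.commute)
qed (use assms in auto)

lemma dim_mat_diag [simp]: "dim_row (mat_diag n f) = n" "dim_col (mat_diag n f) = n"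
  by (simp_all add: mat_diag_def)

lemma mat_diag_index [simp]: "i < n \<Longrightarrow> j < n \<Longrightarrow> mat_diag n f $$ (i, j) = (if i = j then f i else 0)"
  by (simp add: mat_diag_def)

lemma mat_adjoint_mat_diag: "mat_adjoint (mat_diag n f) = mat_diag n (\<lambda>i. cnj (f i))"
  by (rule eq_matI) (auto simp: mat_diag_def)

lemma mat_adjoint_one [simp]: "mat_adjoint (1\<^sub>m n :: complex mat) = 1\<^sub>m n"
  by (rule eq_matI) auto

lemma mat_adjoint_mat_diag_real:
  assumes "\<And>i. i < n \<Longrightarrow> Im (f i) = 0"
  shows "mat_adjoint (mat_diag n f) = mat_diag n f"
proof -
  have "cnj (f i) = f i" if "i < n" for i using assms[OF that] by (simp add: complex_eq_iff)
  then show ?thesis unfolding mat_adjoint_mat_diag by (intro eq_matI) auto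
qed

definition hermitian :: "complex mat \<Rightarrow> bool" where
  "hermitian A \<longleftrightarrow> mat_adjoint A = A"

lemma hermitianI:
  assumes "A \<in> carrier_mat n n" "\<And>i j. i < n \<Longrightarrow> j < n \<Longrightarrow> cnj (A $$ (i, j)) = A $$ (j, i)"
  shows "hermitian A"
  unfolding hermitian_def using assms by (intro eq_matI) auto

lemma hermitian_index:
  assumes "hermitian A" "A \<in> carrier_mat n n" "i < n" "j < n"
  shows "cnj (A $$ (i, j)) = A $$ (j, i)"
  using assms mat_adjoint_index[of j A i] unfolding hermitian_def by auto

lemma row_scalar_prod_eq_sum:
  "A \<in> carrier_mat n m \<Longrightarrow> x \<in> carrier_vec m \<Longrightarrow> i < n \<Longrightarrow> row A i \<bullet> x = (\<Sum>j<m. A $$ (i, j) * x $ j)"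
  by (auto simp: scalar_prod_def row_def atLeast0LessThan)

lemma hermitian_inner:
  assumes "hermitian A" and A: "A \<in> carrier_mat n n" and x: "x \<in> carrier_vec n" and y: "y \<in> carrier_vec n"
  shows "(\<Sum>i<n. cnj ((A *\<^sub>v x) $ i) * y $ i) = (\<Sum>i<n. cnj (x $ i) * (A *\<^sub>v y) $ i)"
proof -
  have "(\<Sum>i<n. cnj ((A *\<^sub>v x) $ i) * y $ i) = (\<Sum>i<n. \<Sum>j<n. cnj (A $$ (i, j)) * cnj (x $ j) * y $ i)"
    using A x by (simp add: row_scalar_prod_eq_sum sum_distrib_right)
  also have "\<dots> = (\<Sum>i<n. \<Sum>j<n. A $$ (j, i) * cnj (x $ j) * y $ i)"
    using hermitian_index[OF assms(1) A] by simp
  also have "\<dots> = (\<Sum>i<n. cnj (x $ i) * (A *\<^sub>v y) $ i)"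
    using A y by (subst sum.swap) (simp add: row_scalar_prod_eq_sum sum_distrib_left mult_ac)
  finally show ?thesis .
qed

lemma sum_cnj_mult_self: "(\<Sum>i<n. cnj (x $ i) * x $ i) = complex_of_real (\<Sum>i<n. (cmod (x $ i))\<^sup>2)"
proof -
  have "cnj (x $ i) * x $ i = complex_of_real ((cmod (x $ i))\<^sup>2)" for i
    by (subst mult.commute, rule complex_norm_square[symmetric])
  then show ?thesis by simp
qed

lemma vec_eq_zero_iff_sum_cmod_sq:
  "x \<in> carrier_vec n \<Longrightarrow> x = 0\<^sub>v n \<longleftrightarrow> (\<Sum>i<n. (cmod (x $ i))\<^sup>2) = 0"
  by (auto simp: sum_nonneg_eq_0_iff vec_eq_iff)

lemma hermitian_eigenvalue_real:
  assumes "hermitian A" "A \<in> carrier_mat n n" "eigenvector A v e"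
  shows "Im e = 0"
proof -
  have v: "v \<in> carrier_vec n" "v \<noteq> 0\<^sub>v n" and Av: "A *\<^sub>v v = e \<cdot>\<^sub>v v"
    using assms(2,3) unfolding eigenvector_def by auto
  define s where "s = (\<Sum>i<n. (cmod (v $ i))\<^sup>2)"
  have "s \<noteq> 0" using vec_eq_zero_iff_sum_cmod_sq[OF v(1)] v(2) unfolding s_def by blast
  have "cnj e * (\<Sum>i<n. cnj (v $ i) * v $ i) = e * (\<Sum>i<n. cnj (v $ i) * v $ i)"
    using hermitian_inner[OF assms(1,2) v(1) v(1)] v(1)
    by (simp add: Av sum_distrib_left mult_ac)
  then have "cnj e = e" using \<open>s \<noteq> 0\<close> unfolding sum_cnj_mult_self s_def[symmetric] by simp
  then have "Im (cnj e) = Im e" by simp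
  then show ?thesis by simp
qed

lemma hermitian_kernel_square:
  assumes "hermitian A" and A: "A \<in> carrier_mat n n"
  shows "mat_kernel (A * A) = mat_kernel A"
proof
  show "mat_kernel A \<subseteq> mat_kernel (A * A)" by (rule mat_kernel_mult_subset[OF A A])
  show "mat_kernel (A * A) \<subseteq> mat_kernel A"
  proof
    fix v assume "v \<in> mat_kernel (A * A)"
    then have v: "v \<in> carrier_vec n" and "A *\<^sub>v (A *\<^sub>v v) = 0\<^sub>v n"
      using A by (auto simp: mat_kernel_def)
    then have "(\<Sum>i<n. cnj ((A *\<^sub>v v) $ i) * (A *\<^sub>v v) $ i) = 0"
      using hermitian_inner[OF assms v, of "A *\<^sub>v v"] A by simp
    then have "(\<Sum>i<n. (cmod ((A *\<^sub>v v) $ i))\<^sup>2) = 0"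
      unfolding sum_cnj_mult_self by (simp only: of_real_eq_0_iff)
    then have "A *\<^sub>v v = 0\<^sub>v n"
      using vec_eq_zero_iff_sum_cmod_sq[of "A *\<^sub>v v" n] A v by simp
    then show "v \<in> mat_kernel A" using v A by (auto simp: mat_kernel_def)
  qed
qed

lemma sum_list_min_2_eq_min_1:
  fixes xs :: "nat list"
  assumes "sum_list (map (min 2) xs) = sum_list (map (min 1) xs)" "x \<in> set xs"
  shows "x \<le> 1"
  using assms
proof (induction xs)
  case (Cons a xs)
  have "sum_list (map (min 1) xs) \<le> sum_list (map (min 2) xs)"
    by (rule sum_list_mono) simp
  moreover have "min 1 a \<le> min 2 a" by simp
  ultimately have "min 2 a = min 1 a" "sum_list (map (min 2) xs) = sum_list (map (min 1) xs)"
    using Cons.prems(1) by auto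
  then show ?case using Cons.IH Cons.prems(2) by auto
qed simp

text \<open>The generalised eigenspaces of orders 2 and 1 coincide because
  \<open>ker (A - e)\<^sup>2 = ker (A - e)\<close>.\<close>

lemma hermitian_jordan_nf_blocks:
  assumes "hermitian A" and A: "A \<in> carrier_mat n n" and "jordan_nf A n_as" "(b, e) \<in> set n_as"
  shows "b = 1 \<and> Im e = 0"
proof -
  have "b \<noteq> 0" using assms(3,4) unfolding jordan_nf_def by force
  have "char_poly A = char_poly (jordan_matrix n_as)"
    using assms(3) unfolding jordan_nf_def by (blast intro: char_poly_similar)
  also have "\<dots> = (\<Prod>(n, a)\<leftarrow>n_as. [:- a, 1:] ^ n)"
    by (rule jordan_matrix_char_poly)
  finally have cp: "char_poly A = (\<Prod>(n, a)\<leftarrow>n_as. [:- a, 1:] ^ n)" .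
  have "poly (char_poly A) e = 0"
    unfolding cp poly_prod_list prod_list_zero_iff using assms(4) \<open>b \<noteq> 0\<close> by force
  then obtain v where "eigenvector A v e"
    using eigenvalue_root_char_poly[OF A] unfolding eigenvalue_def by blast
  then have e: "Im e = 0" by (rule hermitian_eigenvalue_real[OF assms(1) A])
  define B where "B = char_matrix A e"
  have B: "B \<in> carrier_mat n n" using A unfolding B_def by simp
  have "cnj e = e" using e by (simp add: complex_eq_iff)
  then have "hermitian B"
    using A hermitian_index[OF assms(1) A]
    by (intro hermitianI[OF B]) (auto simp: B_def char_matrix_def)
  then have "kernel_dim (B ^\<^sub>m 2) = kernel_dim (B ^\<^sub>m 1)"
    using hermitian_kernel_square[OF _ B] B by (simp add: kernel_dim_def numeral_2_eq_2)
  then have "dim_gen_eigenspace A e 2 = dim_gen_eigenspace A e 1"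
    unfolding dim_gen_eigenspace_def B_def .
  then have "sum_list (map (min 2) (map fst (filter (\<lambda>(n, e'). e' = e) n_as)))
      = sum_list (map (min 1) (map fst (filter (\<lambda>(n, e'). e' = e) n_as)))"
    unfolding dim_gen_eigenspace[OF assms(3)] .
  then have "b \<le> 1" by (rule sum_list_min_2_eq_min_1) (use assms(4) in force)
  then show ?thesis using \<open>b \<noteq> 0\<close> e by simp
qed

lemma jordan_matrix_blocks_1:
  assumes "\<forall>(b, a) \<in> set n_as. b = 1"
  shows "jordan_matrix n_as = mat_diag (length n_as) (\<lambda>i. snd (n_as ! i))"
  using assms
proof (induction n_as)
  case Nil
  show ?case by (rule eq_matI) (auto simp: jordan_matrix_def mat_diag_def)
next
  case (Cons ba n_as)
  then obtain a where ba: "ba = (1, a)" by auto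
  have "sum_list (map fst n_as) = length n_as"
    using arg_cong[OF Cons.IH, of dim_row] Cons.prems by simp
  then show ?case
    using Cons by (intro eq_matI) (auto simp: ba jordan_matrix_Cons nth_Cons' jordan_block_def mat_diag_def)
qed

lemma hermitian_diagonalizable:
  assumes "hermitian A" and A: "A \<in> carrier_mat n n"
  obtains d P Q where "similar_mat_wit A (mat_diag n d) P Q" "\<And>i. i < n \<Longrightarrow> Im (d i) = 0"
proof -
  obtain as where "char_poly A = (\<Prod>a\<leftarrow>as. [:- a, 1:])"
    using char_poly_factorized[OF A] by blast
  then obtain n_as where jnf: "jordan_nf A n_as" using jordan_nf_exists[OF A] by blast
  then obtain P Q where wit: "similar_mat_wit A (jordan_matrix n_as) P Q"
    unfolding jordan_nf_def similar_mat_def by blast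
  have blocks: "b = 1 \<and> Im a = 0" if "(b, a) \<in> set n_as" for b a
    using hermitian_jordan_nf_blocks[OF assms jnf that] .
  then have J: "jordan_matrix n_as = mat_diag (length n_as) (\<lambda>i. snd (n_as ! i))"
    by (intro jordan_matrix_blocks_1) auto
  have "length n_as = n"
    using similar_mat_witD2(5)[OF A wit] unfolding J by auto
  moreover have "Im (snd (n_as ! i)) = 0" if "i < length n_as" for i
    using blocks[of "fst (n_as ! i)" "snd (n_as ! i)"] nth_mem[OF that] by simp
  ultimately show thesis using that wit unfolding J by auto
qed

section \<open>The trace norm of a Hermitian matrix\<close>

lemma sum_list_map_eq_sum_count:
  "sum_list (map f xs) = (\<Sum>x\<in>set xs. of_nat (count_list xs x) * f x)"
proof (induction xs)
  case (Cons a xs)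
  have "(\<Sum>x\<in>set (a # xs). of_nat (count_list (a # xs) x) * f x)
      = (\<Sum>x\<in>insert a (set xs). of_nat (count_list xs x) * f x + (if a = x then f x else 0))"
    by (intro sum.cong refl) (auto simp: algebra_simps)
  also have "\<dots> = (\<Sum>x\<in>insert a (set xs). of_nat (count_list xs x) * f x) + f a"
    by (simp add: sum.distrib)
  also have "(\<Sum>x\<in>insert a (set xs). of_nat (count_list xs x) * f x)
      = (\<Sum>x\<in>set xs. of_nat (count_list xs x) * f x)"
    by (cases "a \<in> set xs") (simp_all add: insert_absorb)
  finally show ?case using Cons.IH by (simp add: add.commute)
qed simp

lemma order_prod_linear_factors:
  fixes xs :: "'a :: idom list"
  shows "order z (\<Prod>a\<leftarrow>xs. [:- a, 1:]) = count_list xs z"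
proof (induction xs)
  case Nil
  then show ?case by (simp add: order_0I)
next
  case (Cons a xs)
  have "[:- a, 1:] \<noteq> 0" "(\<Prod>a\<leftarrow>xs. [:- a, 1:]) \<noteq> 0"
    by auto
  then have nz: "[:- a, 1:] * (\<Prod>a\<leftarrow>xs. [:- a, 1:]) \<noteq> 0" by (rule no_zero_divisors)
  have "order z [:- a, 1:] = (if z = a then 1 else 0)"
  proof (cases "z = a")
    case True
    then show ?thesis using order_power_n_n[of a 1] by simp
  next
    case False
    then have "poly [:- a, 1:] z \<noteq> 0" by simp
    with False show ?thesis by (simp add: order_0I)
  qed
  then show ?case using order_mult[OF nz] Cons.IH by simp
qed

lemma sum_roots_prod_linear_factors:
  fixes xs :: "'a :: idom list"
  defines "p \<equiv> \<Prod>a\<leftarrow>xs. [:- a, 1:]"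
  shows "(\<Sum>z\<in>{z. poly p z = 0}. real (order z p) * f z) = sum_list (map f xs)"
proof -
  have "{z. poly p z = 0} = set xs"
    by (auto simp: p_def poly_prod_list)
  then show ?thesis
    unfolding p_def order_prod_linear_factors sum_list_map_eq_sum_count by simp
qed

lemma diag_mat_mat_diag [simp]: "diag_mat (mat_diag n f) = map f [0..<n]"
  by (simp add: diag_mat_def)

lemma char_poly_mat_diag: "char_poly (mat_diag n f) = (\<Prod>a\<leftarrow>map f [0..<n]. [:- a, 1:])"
  using char_poly_upper_triangular[OF mat_diag_dim, of n f] by (simp add: upper_triangular_def)

lemma mat_pow_2: "A \<in> carrier_mat n n \<Longrightarrow> A ^\<^sub>m 2 = A * A"
  by (simp add: numeral_2_eq_2)

lemma mat_diag_pow_2: "mat_diag n f ^\<^sub>m 2 = mat_diag n (\<lambda>i. f i * f i)"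
  by (simp add: mat_pow_2[OF mat_diag_dim])

lemma trace_norm_diagonalized:
  assumes "hermitian A" "A \<in> carrier_mat n n"
    and wit: "similar_mat_wit A (mat_diag n d) P Q" and real: "\<And>i. i < n \<Longrightarrow> Im (d i) = 0"
  shows "trace_norm A = (\<Sum>i<n. cmod (d i))"
proof -
  have "similar_mat (A * A) (mat_diag n (\<lambda>i. d i * d i))"
    using similar_mat_wit_pow[OF wit, of 2] assms(2)
    unfolding similar_mat_def mat_diag_pow_2 mat_pow_2[OF assms(2)] by blast
  then have "char_poly (mat_adjoint A * A) = (\<Prod>a\<leftarrow>map (\<lambda>i. d i * d i) [0..<n]. [:- a, 1:])"
    using assms(1) unfolding hermitian_def by (simp only: char_poly_similar char_poly_mat_diag)
  then have "trace_norm A = sum_list (map (\<lambda>z. sqrt (Re z)) (map (\<lambda>i. d i * d i) [0..<n]))"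
    unfolding trace_norm_def Let_def by (simp only: sum_roots_prod_linear_factors)
  also have "\<dots> = (\<Sum>i<n. sqrt (Re (d i * d i)))"
    by (simp add: sum_list_sum_nth atLeast0LessThan)
  also have "\<dots> = (\<Sum>i<n. cmod (d i))"
    using real by (intro sum.cong refl) (simp add: cmod_def)
  finally show ?thesis .
qed

definition trace :: "'a :: comm_ring_1 mat \<Rightarrow> 'a" where
  "trace A = (\<Sum>i<dim_row A. A $$ (i, i))"

lemma trace_mult_comm:
  assumes "A \<in> carrier_mat n m" "B \<in> carrier_mat m n"
  shows "trace (A * B) = trace (B * A)"
proof -
  have "trace (A * B) = (\<Sum>i<n. \<Sum>k<m. A $$ (i, k) * B $$ (k, i))"
    unfolding trace_def using assms by (simp add: scalar_prod_def atLeast0LessThan)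
  also have "\<dots> = (\<Sum>k<m. \<Sum>i<n. B $$ (k, i) * A $$ (i, k))"
    by (subst sum.swap) (simp add: mult.commute)
  also have "\<dots> = trace (B * A)"
    unfolding trace_def using assms by (simp add: scalar_prod_def atLeast0LessThan)
  finally show ?thesis .
qed

lemma trace_mat_diag: "trace (mat_diag n f) = (\<Sum>i<n. f i)"
  unfolding trace_def mat_diag_def by simp

lemma similar_mat_wit_same_witnesses:
  assumes "similar_mat_wit A B P Q" "A \<in> carrier_mat n n" "C \<in> carrier_mat n n"
  shows "similar_mat_wit (P * C * Q) C P Q"
  using similar_mat_witD2[OF assms(2,1)] assms(3) by (intro similar_mat_witI) auto

lemma trace_similar_mat_wit:
  assumes "similar_mat_wit A B P Q"
  shows "trace A = trace B"
proof -
  obtain n where "P * Q = 1\<^sub>m n" "Q * P = 1\<^sub>m n" "A = P * B * Q"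
    "B \<in> carrier_mat n n" "P \<in> carrier_mat n n" "Q \<in> carrier_mat n n"
    using similar_mat_witD[OF refl assms] by blast
  then show ?thesis
    using trace_mult_comm[of P n n "B * Q"] by (simp add: assoc_mult_mat[of _ n n _ n _ n])
qed

lemma similar_mat_wit_mat_diag_mult:
  assumes wit: "similar_mat_wit A (mat_diag n d) P Q" and A: "A \<in> carrier_mat n n"
  shows "A * (P * mat_diag n e * Q) = P * mat_diag n (\<lambda>i. d i * e i) * Q"
proof -
  note w = similar_mat_witD2[OF A wit]
  note assoc = assoc_mult_mat[of _ n n _ n _ n]
  have P: "P \<in> carrier_mat n n" and Q: "Q \<in> carrier_mat n n" using w by auto
  have "Q * (P * (mat_diag n e * Q)) = mat_diag n e * Q"
    using P Q w(2) by (simp add: mult_carrier_mat[of _ n n] flip: assoc)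
  then show ?thesis
    unfolding w(3) using P Q by (simp add: assoc mult_carrier_mat[of _ n n] flip: mat_diag_diag)
qed

lemma mat_diag_commute_comp:
  fixes d :: "nat \<Rightarrow> 'a :: idom"
  assumes G: "G \<in> carrier_mat n n" and comm: "G * mat_diag n d = mat_diag n d * G"
  shows "G * mat_diag n (f \<circ> d) = mat_diag n (f \<circ> d) * G"
proof -
  have "G $$ (i, j) * f (d j) = f (d i) * G $$ (i, j)" if "i < n" "j < n" for i j
  proof (cases "G $$ (i, j) = 0")
    case False
    have "G $$ (i, j) * d j = d i * G $$ (i, j)"
      using arg_cong[OF comm, of "\<lambda>M. M $$ (i, j)"] that
      by (simp add: mat_diag_mult_left[OF G] mat_diag_mult_right[OF G])
    then have "G $$ (i, j) * (d j - d i) = 0" by (simp add: algebra_simps)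
    with False have "d j = d i" by simp
    then show ?thesis by (metis mult.commute)
  qed simp
  then show ?thesis
    by (intro eq_matI) (auto simp: mat_diag_mult_left[OF G] mat_diag_mult_right[OF G])
qed

text \<open>The similarity transform of a Hermitian matrix to diagonal form need not be unitary,
  but its Gram matrix \<open>P\<^sup>H P\<close> still commutes with the diagonal form.\<close>

lemma hermitian_similar_gram_commute:
  assumes "hermitian A" and wit: "similar_mat_wit A (mat_diag n d) P Q"
    and A: "A \<in> carrier_mat n n" and real: "\<And>i. i < n \<Longrightarrow> Im (d i) = 0"
  shows "(mat_adjoint P * P) * mat_diag n d = mat_diag n d * (mat_adjoint P * P)"
proof -
  define D where "D = mat_diag n d"
  note wit = similar_mat_witD2[OF A wit, folded D_def]
  have P: "P \<in> carrier_mat n n" and Q: "Q \<in> carrier_mat n n" and D: "D \<in> carrier_mat n n"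
    and PH: "mat_adjoint P \<in> carrier_mat n n" and QH: "mat_adjoint Q \<in> carrier_mat n n"
    using wit by auto
  note assoc = assoc_mult_mat[of _ n n _ n _ n]
  have "mat_adjoint D = D" unfolding D_def using real by (rule mat_adjoint_mat_diag_real)
  then have AH: "mat_adjoint A = mat_adjoint Q * D * mat_adjoint P"
    using wit(3) P Q D by (simp add: mat_adjoint_mult[of _ n n _ n])
  have "mat_adjoint P * (mat_adjoint A * P) = (mat_adjoint P * mat_adjoint Q) * (D * (mat_adjoint P * P))"
    unfolding AH using P D PH QH by (simp add: assoc mult_carrier_mat[of _ n n])
  also have "mat_adjoint P * mat_adjoint Q = 1\<^sub>m n"
    using mat_adjoint_mult[OF Q P] wit(2) by simp
  finally have "mat_adjoint P * (mat_adjoint A * P) = D * (mat_adjoint P * P)"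
    using D PH P by simp
  moreover have "mat_adjoint P * (A * P) = (mat_adjoint P * P) * D"
    unfolding wit(3) using wit(2) P Q D PH by (simp add: assoc)
  ultimately show ?thesis using assms(1) unfolding hermitian_def D_def by simp
qed

lemma hermitian_similar_mat_diag_comp:
  assumes "hermitian A" and wit: "similar_mat_wit A (mat_diag n d) P Q"
    and A: "A \<in> carrier_mat n n" and real: "\<And>i. i < n \<Longrightarrow> Im (d i) = 0"
    and f_real: "\<And>i. i < n \<Longrightarrow> Im (f (d i)) = 0"
  shows "hermitian (P * mat_diag n (f \<circ> d) * Q)"
proof -
  define E where "E = mat_diag n (f \<circ> d)"
  note wit' = similar_mat_witD2[OF A wit]
  have P: "P \<in> carrier_mat n n" and Q: "Q \<in> carrier_mat n n" and E: "E \<in> carrier_mat n n"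
    and PH: "mat_adjoint P \<in> carrier_mat n n" and QH: "mat_adjoint Q \<in> carrier_mat n n"
    using wit' by (auto simp: E_def)
  note assoc = assoc_mult_mat[of _ n n _ n _ n]
  have EH: "mat_adjoint E = E" unfolding E_def using f_real by (intro mat_adjoint_mat_diag_real) simp
  have GE: "(mat_adjoint P * P) * E = E * (mat_adjoint P * P)"
    unfolding E_def using PH P
    by (intro mat_diag_commute_comp hermitian_similar_gram_commute[OF assms(1) wit A real]) auto
  have PH_eq: "mat_adjoint P = (mat_adjoint P * P) * Q"
    using wit'(1) PH P Q by (simp add: assoc)
  have "E * mat_adjoint P = E * ((mat_adjoint P * P) * Q)"
    using PH_eq by (rule arg_cong)
  also have "\<dots> = (E * (mat_adjoint P * P)) * Q"
    using PH P Q E by (simp add: assoc mult_carrier_mat[of _ n n])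
  also have "\<dots> = mat_adjoint P * (P * E * Q)"
    using PH P Q E by (simp add: assoc flip: GE)
  finally have EPH: "E * mat_adjoint P = mat_adjoint P * (P * E * Q)" .
  have "mat_adjoint (P * E * Q) = mat_adjoint Q * (E * mat_adjoint P)"
    using P E Q EH by (simp add: mat_adjoint_mult[of _ n n _ n] assoc)
  also have "\<dots> = (mat_adjoint Q * mat_adjoint P) * (P * E * Q)"
    using PH QH P Q E unfolding EPH by (simp add: assoc mult_carrier_mat[of _ n n])
  also have "mat_adjoint Q * mat_adjoint P = 1\<^sub>m n"
    using mat_adjoint_mult[OF P Q] wit'(1) by simp
  finally show ?thesis unfolding hermitian_def E_def using P E Q by simp
qed

lemma real_mult_sign_eq_cmod:
  assumes "Im z = 0"
  shows "z * (if 0 \<le> Re z then 1 else - 1) = complex_of_real (cmod z)"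
proof -
  have "z = complex_of_real (Re z)" using assms by (simp add: complex_eq_iff)
  moreover have "cmod z = \<bar>Re z\<bar>" using assms by (simp add: cmod_def)
  ultimately show ?thesis by (cases "0 \<le> Re z") simp_all
qed

lemma hermitian_sign_operator:
  assumes "hermitian A" and A: "A \<in> carrier_mat n n"
  obtains S where "S \<in> carrier_mat n n" "hermitian S" "S * S = 1\<^sub>m n"
    "trace (A * S) = complex_of_real (trace_norm A)"
proof -
  obtain d P Q where wit: "similar_mat_wit A (mat_diag n d) P Q" and real: "\<And>i. i < n \<Longrightarrow> Im (d i) = 0"
    using hermitian_diagonalizable[OF assms] by blast
  note w = similar_mat_witD2[OF A wit]
  define sgn_re :: "complex \<Rightarrow> complex" where "sgn_re z = (if 0 \<le> Re z then 1 else - 1)" for z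
    \<comment> \<open>zero eigenvalues get sign \<open>1\<close>, so that \<open>S\<^sup>2 = 1\<close>\<close>
  define S where "S = P * mat_diag n (sgn_re \<circ> d) * Q"
  have S: "S \<in> carrier_mat n n" using w unfolding S_def by (simp add: mult_carrier_mat[of _ n n])
  have wit_S: "similar_mat_wit S (mat_diag n (sgn_re \<circ> d)) P Q"
    unfolding S_def using wit A by (rule similar_mat_wit_same_witnesses) simp
  have "hermitian S"
    unfolding S_def using hermitian_similar_mat_diag_comp[OF assms(1) wit A real, of sgn_re]
    by (simp add: sgn_re_def)
  moreover have "S * S = 1\<^sub>m n"
  proof -
    have "mat_diag n (\<lambda>i. (sgn_re \<circ> d) i * (sgn_re \<circ> d) i) = mat_diag n (\<lambda>i. 1)"
      by (rule arg_cong[where f = "mat_diag n"]) (simp add: sgn_re_def fun_eq_iff)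
    then show ?thesis
      using similar_mat_wit_mat_diag_mult[OF wit_S S, of "sgn_re \<circ> d"] w unfolding S_def[symmetric]
      by simp
  qed
  moreover have "trace (A * S) = complex_of_real (trace_norm A)"
  proof -
    have "trace (A * S) = trace (mat_diag n (\<lambda>i. d i * (sgn_re \<circ> d) i))"
      unfolding S_def similar_mat_wit_mat_diag_mult[OF wit A]
      by (rule trace_similar_mat_wit[OF similar_mat_wit_same_witnesses[OF wit A]]) simp
    also have "\<dots> = (\<Sum>i<n. complex_of_real (cmod (d i)))"
      using real unfolding trace_mat_diag sgn_re_def by (intro sum.cong refl) (simp add: real_mult_sign_eq_cmod)
    also have "\<dots> = complex_of_real (trace_norm A)"
      by (simp add: trace_norm_diagonalized[OF assms(1) A wit real])
    finally show ?thesis .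
  qed
  ultimately show thesis using that S by blast
qed

definition quad_form :: "complex mat \<Rightarrow> complex vec \<Rightarrow> complex" where
  \<comment> \<open>\<open>\<langle>u|S|u\<rangle> = tr (|u\<rangle>\<langle>u| S)\<close>\<close>
  "quad_form S u = (\<Sum>r<dim_vec u. \<Sum>s<dim_vec u. u $ r * cnj (u $ s) * S $$ (s, r))"

lemma vnorm_sq: "(vnorm v)\<^sup>2 = (\<Sum>i<dim_vec v. (cmod (v $ i))\<^sup>2)"
  unfolding vnorm_def by (simp add: sum_nonneg)

lemma quad_form_one:
  assumes "dim_vec u = n"
  shows "quad_form (1\<^sub>m n) u = complex_of_real ((vnorm u)\<^sup>2)"
proof -
  have "quad_form (1\<^sub>m n) u = (\<Sum>r<n. cnj (u $ r) * u $ r)"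
    unfolding quad_form_def assms by (simp add: mult.commute if_distrib cong: if_cong)
  then show ?thesis unfolding sum_cnj_mult_self vnorm_sq assms .
qed

lemma quad_form_scale:
  "quad_form S (complex_of_real t \<cdot>\<^sub>v u) = complex_of_real (t\<^sup>2) * quad_form S u"
  unfolding quad_form_def by (simp add: sum_distrib_left power2_eq_square mult_ac)

lemma cmod_diff_sq: "(cmod (a - b))\<^sup>2 = (cmod a)\<^sup>2 + (cmod b)\<^sup>2 - 2 * Re (cnj a * b)"
  unfolding cmod_power2 by (simp add: power2_eq_square algebra_simps)

lemma cmod_add_sq: "(cmod (a + b))\<^sup>2 = (cmod a)\<^sup>2 + (cmod b)\<^sup>2 + 2 * Re (cnj a * b)"
  unfolding cmod_power2 by (simp add: power2_eq_square algebra_simps)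

text \<open>A Hermitian involution is unitary, so \<open>v = S u\<close> has the norm of \<open>u\<close>, and the
  bound follows from \<open>0 \<le> \<parallel>u \<mp> v\<parallel>\<^sup>2\<close>.\<close>

lemma quad_form_involution_bound:
  assumes "hermitian S" and S: "S \<in> carrier_mat n n" and SS: "S * S = 1\<^sub>m n"
    and u: "u \<in> carrier_vec n"
  shows "\<bar>Re (quad_form S u)\<bar> \<le> (vnorm u)\<^sup>2"
proof -
  define v where "v = S *\<^sub>v u"
  have v: "v \<in> carrier_vec n" unfolding v_def using S u by simp
  have "quad_form S u = (\<Sum>s<n. cnj (u $ s) * v $ s)"
    unfolding quad_form_def v_def using S u
    by (subst sum.swap) (simp add: row_scalar_prod_eq_sum sum_distrib_left mult_ac)
  then have re: "Re (quad_form S u) = (\<Sum>i<n. Re (cnj (u $ i) * v $ i))"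
    by simp
  have "S *\<^sub>v v = u" unfolding v_def using S u SS by (simp flip: assoc_mult_mat_vec)
  then have "(\<Sum>i<n. cnj (v $ i) * v $ i) = (\<Sum>i<n. cnj (u $ i) * u $ i)"
    using hermitian_inner[OF assms(1) S u v] unfolding v_def by simp
  then have vu: "(\<Sum>i<n. (cmod (v $ i))\<^sup>2) = (\<Sum>i<n. (cmod (u $ i))\<^sup>2)"
    unfolding sum_cnj_mult_self by (simp only: of_real_eq_iff)
  have "0 \<le> (\<Sum>i<n. (cmod (u $ i - v $ i))\<^sup>2)" by (intro sum_nonneg) simp
  also have "\<dots> = (\<Sum>i<n. (cmod (u $ i))\<^sup>2) + (\<Sum>i<n. (cmod (v $ i))\<^sup>2) - 2 * Re (quad_form S u)"
    unfolding re cmod_diff_sq by (simp add: sum.distrib sum_subtractf sum_distrib_left)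
  finally have upper: "Re (quad_form S u) \<le> (\<Sum>i<n. (cmod (u $ i))\<^sup>2)" using vu by simp
  have "0 \<le> (\<Sum>i<n. (cmod (u $ i + v $ i))\<^sup>2)" by (intro sum_nonneg) simp
  also have "\<dots> = (\<Sum>i<n. (cmod (u $ i))\<^sup>2) + (\<Sum>i<n. (cmod (v $ i))\<^sup>2) + 2 * Re (quad_form S u)"
    unfolding re cmod_add_sq by (simp add: sum.distrib sum_distrib_left)
  finally have "- Re (quad_form S u) \<le> (\<Sum>i<n. (cmod (u $ i))\<^sup>2)" using vu by simp
  then show ?thesis using upper u unfolding vnorm_sq by auto
qed

lemma weighted_cauchy_schwarz:
  fixes w a :: "'i \<Rightarrow> real"
  assumes "\<And>i. i \<in> A \<Longrightarrow> w i \<ge> 0"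
  shows "(\<Sum>i\<in>A. w i * a i)\<^sup>2 \<le> (\<Sum>i\<in>A. w i) * (\<Sum>i\<in>A. w i * (a i)\<^sup>2)"
proof -
  have "0 \<le> (\<Sum>i\<in>A. \<Sum>j\<in>A. w i * w j * (a i - a j)\<^sup>2)"
    using assms by (intro sum_nonneg mult_nonneg_nonneg) auto
  also have "\<dots> = (\<Sum>i\<in>A. \<Sum>j\<in>A. w i * (a i)\<^sup>2 * w j + w i * w j * (a j)\<^sup>2
      - 2 * ((w i * a i) * (w j * a j)))"
    by (intro sum.cong refl) (simp add: power2_eq_square algebra_simps)
  also have "\<dots> = (\<Sum>i\<in>A. \<Sum>j\<in>A. w i * (a i)\<^sup>2 * w j) + (\<Sum>i\<in>A. \<Sum>j\<in>A. w i * w j * (a j)\<^sup>2)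
      - 2 * (\<Sum>i\<in>A. \<Sum>j\<in>A. (w i * a i) * (w j * a j))"
    by (simp add: sum.distrib sum_subtractf sum_distrib_left)
  also have "(\<Sum>i\<in>A. \<Sum>j\<in>A. w i * (a i)\<^sup>2 * w j) = (\<Sum>i\<in>A. w i * (a i)\<^sup>2) * (\<Sum>i\<in>A. w i)"
    by (simp add: sum_product)
  also have "(\<Sum>i\<in>A. \<Sum>j\<in>A. w i * w j * (a j)\<^sup>2) = (\<Sum>i\<in>A. w i) * (\<Sum>i\<in>A. w i * (a i)\<^sup>2)"
    by (simp add: sum_product mult.assoc)
  also have "(\<Sum>i\<in>A. \<Sum>j\<in>A. (w i * a i) * (w j * a j)) = (\<Sum>i\<in>A. w i * a i)\<^sup>2"
    by (simp add: sum_product power2_eq_square)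
  finally show ?thesis by simp
qed

lemma expect_abs_le_sqrt_expect_sq:
  fixes p Y :: "'i \<Rightarrow> real"
  assumes p: "\<And>i. i \<in> A \<Longrightarrow> p i \<ge> 0" and "(\<Sum>i\<in>A. p i) = 1"
  shows "(\<Sum>i\<in>A. p i * \<bar>Y i\<bar>) \<le> sqrt (\<Sum>i\<in>A. p i * (Y i)\<^sup>2)"
proof (rule real_le_rsqrt)
  show "(\<Sum>i\<in>A. p i * \<bar>Y i\<bar>)\<^sup>2 \<le> (\<Sum>i\<in>A. p i * (Y i)\<^sup>2)"
    using weighted_cauchy_schwarz[of A p "\<lambda>i. \<bar>Y i\<bar>"] assms by simp
qed

lemma ratio_sub_le_abs:
  fixes x q :: real
  assumes "\<bar>q\<bar> \<le> x"
  shows "q / x - q \<le> \<bar>1 - x\<bar>"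
proof (cases "x = 0")
  case False
  then have x: "x > 0" using assms by linarith
  have "q / x - q = (1 / x - 1) * q" by (simp add: field_simps)
  also have "\<dots> \<le> \<bar>1 / x - 1\<bar> * \<bar>q\<bar>" by (simp flip: abs_mult)
  also have "\<dots> \<le> \<bar>1 / x - 1\<bar> * x" using assms by (intro mult_left_mono) auto
  also have "\<dots> = \<bar>1 - x\<bar>" using x by (simp add: abs_mult[symmetric] field_simps)
  finally show ?thesis .
qed (use assms in simp)

lemma expect_ratio_le:
  fixes p X q :: "'i \<Rightarrow> real"
  assumes p: "\<And>i. i \<in> A \<Longrightarrow> p i \<ge> 0" and p1: "(\<Sum>i\<in>A. p i) = 1"
    and q: "\<And>i. i \<in> A \<Longrightarrow> \<bar>q i\<bar> \<le> X i" and EX: "1 \<le> (\<Sum>i\<in>A. p i * X i)"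
  shows "(\<Sum>i\<in>A. p i * (q i / X i)) \<le> (\<Sum>i\<in>A. p i * q i)
    + sqrt (\<Sum>i\<in>A. p i * (X i - (\<Sum>i\<in>A. p i * X i))\<^sup>2) + ((\<Sum>i\<in>A. p i * X i) - 1)"
proof -
  define E where "E = (\<Sum>i\<in>A. p i * X i)"
  have "(\<Sum>i\<in>A. p i * (q i / X i)) - (\<Sum>i\<in>A. p i * q i) = (\<Sum>i\<in>A. p i * (q i / X i - q i))"
    by (simp add: sum_subtractf right_diff_distrib)
  also have "\<dots> \<le> (\<Sum>i\<in>A. p i * (\<bar>X i - E\<bar> + (E - 1)))"
    using p q EX unfolding E_def by (intro sum_mono mult_left_mono order_trans[OF ratio_sub_le_abs]) auto
  also have "\<dots> = (\<Sum>i\<in>A. p i * \<bar>X i - E\<bar>) + (E - 1)"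
    by (simp add: distrib_left sum.distrib p1 flip: sum_distrib_right)
  also have "(\<Sum>i\<in>A. p i * \<bar>X i - E\<bar>) \<le> sqrt (\<Sum>i\<in>A. p i * (X i - E)\<^sup>2)"
    by (rule expect_abs_le_sqrt_expect_sq[OF p p1])
  finally show ?thesis unfolding E_def by simp
qed

lemma samples_0 [simp]: "samples m 0 = {[]}"
  unfolding samples_def by auto

lemma samples_Suc: "samples m (Suc k) = (\<lambda>(j, js). j # js) ` ({..<m} \<times> samples m k)"
proof
  show "samples m (Suc k) \<subseteq> (\<lambda>(j, js). j # js) ` ({..<m} \<times> samples m k)"
  proof
    fix xs assume xs: "xs \<in> samples m (Suc k)"
    then obtain j js where "xs = j # js" unfolding samples_def by (cases xs) auto
    with xs show "xs \<in> (\<lambda>(j, js). j # js) ` ({..<m} \<times> samples m k)"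
      unfolding samples_def by (auto intro!: image_eqI[of _ _ "(j, js)"])
  qed
qed (auto simp: samples_def)

lemma finite_samples [simp]: "finite (samples m k)"
  by (induction k) (simp_all add: samples_Suc)

lemma sum_samples_Suc:
  "(\<Sum>js\<in>samples m (Suc k). f js) = (\<Sum>j<m. \<Sum>js\<in>samples m k. f (j # js))"
proof -
  have "inj_on (\<lambda>(j, js). j # js) ({..<m} \<times> samples m k)" by (auto simp: inj_on_def)
  then show ?thesis
    unfolding samples_Suc by (simp add: sum.reindex sum.cartesian_product split_def)
qed

lemma sum_samples_prod:
  fixes F :: "nat \<Rightarrow> nat \<Rightarrow> 'a :: comm_semiring_1"
  shows "(\<Sum>js\<in>samples m k. \<Prod>\<alpha><k. F \<alpha> (js ! \<alpha>)) = (\<Prod>\<alpha><k. \<Sum>j<m. F \<alpha> j)"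
proof (induction k arbitrary: F)
  case (Suc k)
  have "(\<Sum>js\<in>samples m (Suc k). \<Prod>\<alpha><Suc k. F \<alpha> (js ! \<alpha>))
      = (\<Sum>j<m. F 0 j * (\<Sum>js\<in>samples m k. \<Prod>\<alpha><k. F (Suc \<alpha>) (js ! \<alpha>)))"
    unfolding sum_samples_Suc prod.lessThan_Suc_shift by (simp add: sum_distrib_left)
  also have "\<dots> = (\<Prod>\<alpha><Suc k. \<Sum>j<m. F \<alpha> j)"
    using Suc.IH[of "\<lambda>\<alpha>. F (Suc \<alpha>)"] unfolding prod.lessThan_Suc_shift
    by (simp add: sum_distrib_right)
  finally show ?case .
qed simp

lemma sum_samples_pair_moment:
  fixes w f g :: "nat \<Rightarrow> 'a :: comm_semiring_1"
  assumes a: "a < k" and b: "b < k" and w: "(\<Sum>j<m. w j) = 1"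
  shows "(\<Sum>js\<in>samples m k. (\<Prod>\<alpha><k. w (js ! \<alpha>)) * (f (js ! a) * g (js ! b)))
    = (if a = b then (\<Sum>j<m. w j * (f j * g j)) else (\<Sum>j<m. w j * f j) * (\<Sum>j<m. w j * g j))"
proof -
  define F where "F \<alpha> j = w j * ((if \<alpha> = a then f j else 1) * (if \<alpha> = b then g j else 1))" for \<alpha> j
  have "(\<Prod>\<alpha><k. w (js ! \<alpha>)) * (f (js ! a) * g (js ! b)) = (\<Prod>\<alpha><k. F \<alpha> (js ! \<alpha>))" for js
    unfolding F_def prod.distrib using a b by simp
  then have "(\<Sum>js\<in>samples m k. (\<Prod>\<alpha><k. w (js ! \<alpha>)) * (f (js ! a) * g (js ! b)))
      = (\<Prod>\<alpha><k. \<Sum>j<m. F \<alpha> j)"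
    by (simp add: sum_samples_prod)
  also have "\<dots> = (if a = b then (\<Sum>j<m. w j * (f j * g j))
      else (\<Sum>j<m. w j * f j) * (\<Sum>j<m. w j * g j))"
  proof (cases "a = b")
    case True
    then have "(\<Sum>j<m. F \<alpha> j) = (if \<alpha> = a then (\<Sum>j<m. w j * (f j * g j)) else 1)" for \<alpha>
      using w by (simp add: F_def)
    then show ?thesis using True a by simp
  next
    case False
    then have "(\<Sum>j<m. F \<alpha> j)
        = (if \<alpha> = a then (\<Sum>j<m. w j * f j) else 1) * (if \<alpha> = b then (\<Sum>j<m. w j * g j) else 1)" for \<alpha>
      using w by (simp add: F_def)
    then show ?thesis using False a b by (simp add: prod.distrib)
  qed
  finally show ?thesis .
qed

lemma sum_if_diagonal:
  "(\<Sum>a<k. \<Sum>b<k. if a = b then x else y) = of_nat k * x + (of_nat k * of_nat k - of_nat k) * (y :: 'a :: comm_ring_1)"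
proof -
  have "(\<Sum>b<k. if a = b then x else y) = of_nat k * y + (x - y)" if "a < k" for a
  proof -
    have "(\<Sum>b<k. if a = b then x else y) = (\<Sum>b<k. y + (if a = b then x - y else 0))"
      by (intro sum.cong) auto
    then show ?thesis using that by (simp add: sum.distrib)
  qed
  then have "(\<Sum>a<k. \<Sum>b<k. if a = b then x else y) = (\<Sum>a<k. of_nat k * y + (x - y))"
    by simp
  then show ?thesis by (simp add: algebra_simps)
qed

lemma sum_samples_sum_mult_sum:
  fixes w f g :: "nat \<Rightarrow> 'a :: comm_ring_1"
  assumes w: "(\<Sum>j<m. w j) = 1"
  shows "(\<Sum>js\<in>samples m k. (\<Prod>\<alpha><k. w (js ! \<alpha>)) * ((\<Sum>a<k. f (js ! a)) * (\<Sum>b<k. g (js ! b))))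
    = of_nat k * (\<Sum>j<m. w j * (f j * g j))
      + (of_nat k * of_nat k - of_nat k) * ((\<Sum>j<m. w j * f j) * (\<Sum>j<m. w j * g j))"
proof -
  have "(\<Sum>js\<in>samples m k. (\<Prod>\<alpha><k. w (js ! \<alpha>)) * ((\<Sum>a<k. f (js ! a)) * (\<Sum>b<k. g (js ! b))))
      = (\<Sum>js\<in>samples m k. \<Sum>a<k. \<Sum>b<k. (\<Prod>\<alpha><k. w (js ! \<alpha>)) * (f (js ! a) * g (js ! b)))"
    unfolding sum_product by (simp add: sum_distrib_left)
  also have "\<dots> = (\<Sum>a<k. \<Sum>b<k. \<Sum>js\<in>samples m k. (\<Prod>\<alpha><k. w (js ! \<alpha>)) * (f (js ! a) * g (js ! b)))"
    by (subst sum.swap) (rule sum.cong[OF refl], rule sum.swap)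
  also have "\<dots> = (\<Sum>a<k. \<Sum>b<k. if a = b then (\<Sum>j<m. w j * (f j * g j))
      else (\<Sum>j<m. w j * f j) * (\<Sum>j<m. w j * g j))"
    by (intro sum.cong refl) (simp add: sum_samples_pair_moment w)
  finally show ?thesis by (simp only: sum_if_diagonal)
qed

lemma sample_prob_samples:
  "js \<in> samples m k \<Longrightarrow> sample_prob c m js = (\<Prod>\<alpha><k. cmod (c (js ! \<alpha>)) / l1_norm c m)"
  unfolding sample_prob_def samples_def by simp

lemma sample_prob_nonneg: "sample_prob c m js \<ge> 0"
  unfolding sample_prob_def l1_norm_def by (auto intro!: prod_nonneg divide_nonneg_nonneg sum_nonneg)

lemma sum_cmod_div_l1_norm: "l1_norm c m \<noteq> 0 \<Longrightarrow> (\<Sum>j<m. cmod (c j) / l1_norm c m) = 1"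
  unfolding l1_norm_def by (simp flip: sum_divide_distrib)

lemma sum_sample_prob:
  assumes "l1_norm c m \<noteq> 0"
  shows "(\<Sum>js\<in>samples m k. sample_prob c m js) = 1"
proof -
  have "(\<Sum>js\<in>samples m k. sample_prob c m js)
      = (\<Sum>js\<in>samples m k. \<Prod>\<alpha><k. cmod (c (js ! \<alpha>)) / l1_norm c m)"
    by (intro sum.cong refl) (rule sample_prob_samples)
  also have "\<dots> = 1"
    using sum_samples_prod[of "\<lambda>_ j. cmod (c j) / l1_norm c m"] by (simp add: sum_cmod_div_l1_norm[OF assms])
  finally show ?thesis .
qed

section \<open>Moments of the sparsified vector\<close>

text \<open>The phase \<open>z / |z|\<close> of \<open>z = 0\<close> is the junk value \<open>0\<close>; the identities below hold
  anyway because the weight \<open>|z| / L\<close> vanishes as well.\<close>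

lemma phase_weight_mult:
  "complex_of_real (cmod z / L) * (z / complex_of_real (cmod z) * x) = z * x / complex_of_real L"
  by (cases "z = 0") (simp_all add: field_simps)

lemma phase_weight_mult_cnj:
  "complex_of_real (cmod z / L) * cnj (z / complex_of_real (cmod z) * x) = cnj (z * x) / complex_of_real L"
  by (cases "z = 0") (simp_all add: field_simps)

lemma phase_weight_mult_outer:
  "complex_of_real (cmod z / L) * (z / complex_of_real (cmod z) * x * cnj (z / complex_of_real (cmod z) * y))
    = complex_of_real (cmod z) * (x * cnj y) / complex_of_real L"
proof (cases "z = 0")
  case False
  have "z * cnj z = complex_of_real (cmod z) * complex_of_real (cmod z)"
    using complex_norm_square[of z] by (simp add: power2_eq_square)
  with False show ?thesis by (simp add: field_simps)
qed simp

lemma Omega_index: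
  "js \<in> samples m k \<Longrightarrow> i < qdim n \<Longrightarrow> Omega n c \<phi> m js $ i =
    complex_of_real (l1_norm c m / real k) *
      (\<Sum>\<alpha><k. c (js ! \<alpha>) / complex_of_real (cmod (c (js ! \<alpha>))) * \<phi> (js ! \<alpha>) $ i)"
  unfolding Omega_def samples_def by simp

text \<open>Each draw has mean \<open>\<psi> / \<parallel>c\<parallel>\<^sub>1\<close>; the \<open>k\<^sup>2 - k\<close> pairs of distinct draws are
  independent, the \<open>k\<close> diagonal pairs contribute \<open>\<Sum>\<^sub>j |c\<^sub>j| |\<phi>\<^sub>j\<rangle>\<langle>\<phi>\<^sub>j| / \<parallel>c\<parallel>\<^sub>1\<close>.\<close>

lemma expect_Omega_outer:
  assumes k: "k \<ge> 1" and L: "l1_norm c m \<noteq> 0" and r: "r < qdim n" and s: "s < qdim n"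
  shows "(\<Sum>js\<in>samples m k. complex_of_real (sample_prob c m js) *
      (Omega n c \<phi> m js $ r * cnj (Omega n c \<phi> m js $ s)))
    = complex_of_real (1 - 1 / real k) * ((\<Sum>j<m. c j * \<phi> j $ r) * cnj (\<Sum>j<m. c j * \<phi> j $ s))
      + complex_of_real (l1_norm c m / real k) *
        (\<Sum>j<m. complex_of_real (cmod (c j)) * (\<phi> j $ r * cnj (\<phi> j $ s)))"
    (is "_ = complex_of_real _ * (?\<psi>\<^sub>r * ?\<psi>\<^sub>s) + complex_of_real _ * ?A")
proof -
  define L where "L = l1_norm c m"
  define \<pi> where "\<pi> j = complex_of_real (cmod (c j) / L)" for j
  define w where "w j i = c j / complex_of_real (cmod (c j)) * \<phi> j $ i" for j i
  have "(\<Sum>j<m. \<pi> j) = complex_of_real (\<Sum>j<m. cmod (c j) / L)"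
    unfolding \<pi>_def by (simp only: of_real_sum)
  then have \<pi>: "(\<Sum>j<m. \<pi> j) = 1" using sum_cmod_div_l1_norm[OF L] unfolding L_def by simp
  have "complex_of_real (sample_prob c m js) * (Omega n c \<phi> m js $ r * cnj (Omega n c \<phi> m js $ s))
      = complex_of_real ((L / real k)\<^sup>2) *
        ((\<Prod>\<alpha><k. \<pi> (js ! \<alpha>)) * ((\<Sum>a<k. w (js ! a) r) * (\<Sum>b<k. cnj (w (js ! b) s))))"
    if "js \<in> samples m k" for js
    unfolding Omega_index[OF that r] Omega_index[OF that s] sample_prob_samples[OF that]
    by (simp add: \<pi>_def w_def L_def power2_eq_square mult_ac)
  then have "(\<Sum>js\<in>samples m k. complex_of_real (sample_prob c m js) *
      (Omega n c \<phi> m js $ r * cnj (Omega n c \<phi> m js $ s)))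
    = complex_of_real ((L / real k)\<^sup>2) * (\<Sum>js\<in>samples m k.
        (\<Prod>\<alpha><k. \<pi> (js ! \<alpha>)) * ((\<Sum>a<k. w (js ! a) r) * (\<Sum>b<k. cnj (w (js ! b) s))))"
    by (simp add: sum_distrib_left)
  also have "\<dots> = complex_of_real ((L / real k)\<^sup>2) * (of_nat k * (\<Sum>j<m. \<pi> j * (w j r * cnj (w j s))) +
       (of_nat k * of_nat k - of_nat k) * ((\<Sum>j<m. \<pi> j * w j r) * (\<Sum>j<m. \<pi> j * cnj (w j s))))"
    by (simp only: sum_samples_sum_mult_sum[OF \<pi>, of k "\<lambda>j. w j r" "\<lambda>j. cnj (w j s)"])
  also have "(\<Sum>j<m. \<pi> j * (w j r * cnj (w j s))) = ?A / complex_of_real L"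
    unfolding \<pi>_def w_def phase_weight_mult_outer sum_divide_distrib ..
  also have "(\<Sum>j<m. \<pi> j * w j r) = ?\<psi>\<^sub>r / complex_of_real L"
    unfolding \<pi>_def w_def phase_weight_mult sum_divide_distrib ..
  also have "(\<Sum>j<m. \<pi> j * cnj (w j s)) = ?\<psi>\<^sub>s / complex_of_real L"
    unfolding \<pi>_def w_def phase_weight_mult_cnj sum_divide_distrib cnj_sum ..
  also have "complex_of_real ((L / real k)\<^sup>2) * (of_nat k * (?A / complex_of_real L) +
      (of_nat k * of_nat k - of_nat k) * (?\<psi>\<^sub>r / complex_of_real L * (?\<psi>\<^sub>s / complex_of_real L)))
    = complex_of_real (1 - 1 / real k) * (?\<psi>\<^sub>r * ?\<psi>\<^sub>s) + complex_of_real (L / real k) * ?A"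
  proof -
    have "complex_of_real L \<noteq> 0" "(of_nat k :: complex) \<noteq> 0" using L k unfolding L_def by auto
    then show ?thesis by (simp add: field_simps power2_eq_square)
  qed
  finally show ?thesis unfolding L_def .
qed

lemma dim_Omega [simp]: "dim_vec (Omega n c \<phi> m js) = qdim n"
  by (simp add: Omega_def)

lemma expect_quad_form_Omega:
  assumes k: "k \<ge> 1" and L: "l1_norm c m \<noteq> 0" and dim: "\<And>j. j < m \<Longrightarrow> dim_vec (\<phi> j) = qdim n"
  shows "(\<Sum>js\<in>samples m k. complex_of_real (sample_prob c m js) * quad_form S (Omega n c \<phi> m js))
    = complex_of_real (1 - 1 / real k) * quad_form S (vec (qdim n) (\<lambda>i. \<Sum>j<m. c j * \<phi> j $ i))
      + complex_of_real (l1_norm c m / real k) * (\<Sum>j<m. complex_of_real (cmod (c j)) * quad_form S (\<phi> j))"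
proof -
  define N where "N = qdim n"
  define p where "p js = complex_of_real (sample_prob c m js)" for js
  define a where "a = complex_of_real (1 - 1 / real k)"
  define b where "b = complex_of_real (l1_norm c m / real k)"
  define \<psi> where "\<psi> = vec N (\<lambda>i. \<Sum>j<m. c j * \<phi> j $ i)"
  define \<Omega> where "\<Omega> = Omega n c \<phi> m"
  have d\<psi>: "dim_vec \<psi> = N" by (simp add: \<psi>_def)
  have "(\<Sum>js\<in>samples m k. p js * quad_form S (\<Omega> js))
    = (\<Sum>r<N. \<Sum>s<N. (\<Sum>js\<in>samples m k. p js * (\<Omega> js $ r * cnj (\<Omega> js $ s))) * S $$ (s, r))"
    unfolding quad_form_def \<Omega>_def N_def
    by (simp add: sum_distrib_left sum_distrib_right mult_ac sum.swap[of _ "samples m k"])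
  also have "\<dots> = (\<Sum>r<N. \<Sum>s<N. (a * (\<psi> $ r * cnj (\<psi> $ s))
      + b * (\<Sum>j<m. complex_of_real (cmod (c j)) * (\<phi> j $ r * cnj (\<phi> j $ s)))) * S $$ (s, r))"
    unfolding p_def \<Omega>_def a_def b_def \<psi>_def N_def
    by (intro sum.cong refl) (simp add: expect_Omega_outer[OF k L])
  also have "\<dots> = a * quad_form S \<psi> + b * (\<Sum>j<m. complex_of_real (cmod (c j)) * quad_form S (\<phi> j))"
    using dim d\<psi> unfolding quad_form_def N_def[symmetric]
    by (simp add: algebra_simps sum.distrib sum_distrib_left sum_distrib_right sum.swap[of _ "{..<m}"])
  finally show ?thesis unfolding p_def \<Omega>_def a_def b_def \<psi>_def N_def .
qed

lemma expect_vnorm_sq_Omega: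
  assumes k: "k \<ge> 1" and L: "l1_norm c m \<noteq> 0"
    and unit: "\<And>j. j < m \<Longrightarrow> dim_vec (\<phi> j) = qdim n \<and> vnorm (\<phi> j) = 1"
    and \<psi>: "vnorm (vec (qdim n) (\<lambda>i. \<Sum>j<m. c j * \<phi> j $ i)) = 1"
  shows "(\<Sum>js\<in>samples m k. sample_prob c m js * (vnorm (Omega n c \<phi> m js))\<^sup>2)
    = 1 - 1 / real k + (l1_norm c m)\<^sup>2 / real k"
proof -
  have "complex_of_real (\<Sum>js\<in>samples m k. sample_prob c m js * (vnorm (Omega n c \<phi> m js))\<^sup>2)
    = (\<Sum>js\<in>samples m k. complex_of_real (sample_prob c m js) * quad_form (1\<^sub>m (qdim n)) (Omega n c \<phi> m js))"
    by (simp add: quad_form_one)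
  also have "\<dots> = complex_of_real (1 - 1 / real k) * quad_form (1\<^sub>m (qdim n)) (vec (qdim n) (\<lambda>i. \<Sum>j<m. c j * \<phi> j $ i))
      + complex_of_real (l1_norm c m / real k) * (\<Sum>j<m. complex_of_real (cmod (c j)) * quad_form (1\<^sub>m (qdim n)) (\<phi> j))"
    using unit by (intro expect_quad_form_Omega[OF k L]) blast
  also have "\<dots> = complex_of_real (1 - 1 / real k + (l1_norm c m)\<^sup>2 / real k)"
    using unit \<psi> by (simp add: quad_form_one l1_norm_def power2_eq_square)
  finally show ?thesis by (simp only: of_real_eq_iff)
qed

section \<open>The sparsified ensemble\<close>

lemma stabilizer_state_carrier: "stabilizer_state n v \<Longrightarrow> v \<in> carrier_vec (qdim n)"
  and stabilizer_state_vnorm: "stabilizer_state n v \<Longrightarrow> vnorm v = 1"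
  unfolding stabilizer_state_def by simp_all

lemma l1_norm_ge_1:
  assumes unit: "\<And>j. j < m \<Longrightarrow> dim_vec (\<phi> j) = N \<and> vnorm (\<phi> j) = 1"
    and "vnorm (vec N (\<lambda>i. \<Sum>j<m. c j * \<phi> j $ i)) = 1"
  shows "1 \<le> l1_norm c m"
proof -
  define L where "L = l1_norm c m"
  have L0: "0 \<le> L" unfolding L_def l1_norm_def by (simp add: sum_nonneg)
  have phi1: "(\<Sum>i<N. (cmod (\<phi> j $ i))\<^sup>2) = 1" if "j < m" for j
    using unit[OF that] vnorm_sq[of "\<phi> j"] by simp
  have "1 = (vnorm (vec N (\<lambda>i. \<Sum>j<m. c j * \<phi> j $ i)))\<^sup>2" using assms(2) by simp
  also have "\<dots> = (\<Sum>i<N. (cmod (\<Sum>j<m. c j * \<phi> j $ i))\<^sup>2)" by (simp add: vnorm_sq)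
  also have "\<dots> \<le> (\<Sum>i<N. L * (\<Sum>j<m. cmod (c j) * (cmod (\<phi> j $ i))\<^sup>2))"
  proof (intro sum_mono)
    fix i
    have "cmod (\<Sum>j<m. c j * \<phi> j $ i) \<le> (\<Sum>j<m. cmod (c j) * cmod (\<phi> j $ i))"
      by (rule order_trans[OF norm_sum]) (simp add: norm_mult)
    then have "(cmod (\<Sum>j<m. c j * \<phi> j $ i))\<^sup>2 \<le> (\<Sum>j<m. cmod (c j) * cmod (\<phi> j $ i))\<^sup>2"
      by (intro power_mono) auto
    also have "\<dots> \<le> L * (\<Sum>j<m. cmod (c j) * (cmod (\<phi> j $ i))\<^sup>2)"
      unfolding L_def l1_norm_def by (rule weighted_cauchy_schwarz) simp
    finally show "(cmod (\<Sum>j<m. c j * \<phi> j $ i))\<^sup>2 \<le> L * (\<Sum>j<m. cmod (c j) * (cmod (\<phi> j $ i))\<^sup>2)" .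
  qed
  also have "\<dots> = L * (\<Sum>j<m. cmod (c j) * (\<Sum>i<N. (cmod (\<phi> j $ i))\<^sup>2))"
    by (simp add: sum_distrib_left sum.swap[of _ "{..<N}"])
  also have "\<dots> = L * L" using phi1 unfolding L_def l1_norm_def by simp
  finally have "1 \<le> L * L" .
  then have "1\<^sup>2 \<le> L\<^sup>2" by (simp add: power2_eq_square)
  then show ?thesis unfolding L_def[symmetric] using L0 by (rule power2_le_imp_le)
qed

lemma stabilizer_rank_sampled_state:
  assumes stab: "\<forall>j<m. stabilizer_state n (\<phi> j)" and js: "js \<in> samples m k"
  shows "stabilizer_rank n (sampled_state n c \<phi> m js) \<le> k"
proof -
  define a where "a \<alpha> = complex_of_real (1 / vnorm (Omega n c \<phi> m js)) * complex_of_real (l1_norm c m / real k) *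
     (c (js ! \<alpha>) / complex_of_real (cmod (c (js ! \<alpha>))))" for \<alpha>
  have "length js = k" "set js \<subseteq> {..<m}" using js unfolding samples_def by auto
  then have "js ! \<alpha> < m" if "\<alpha> < k" for \<alpha> using that nth_mem by blast
  then have stab_js: "\<forall>\<alpha><k. stabilizer_state n (\<phi> (js ! \<alpha>))" using stab by blast
  have sampled:  "sampled_state n c \<phi> m js = vec (qdim n) (\<lambda>i. \<Sum>\<alpha><k. a \<alpha> * \<phi> (js ! \<alpha>) $ i)"
  proof (rule eq_vecI)
    fix i assume "i < dim_vec (vec (qdim n) (\<lambda>i. \<Sum>\<alpha><k. a \<alpha> * \<phi> (js ! \<alpha>) $ i))"
    then have i: "i < qdim n" by simp
    show "sampled_state n c \<phi> m js $ i = vec (qdim n) (\<lambda>i. \<Sum>\<alpha><k. a \<alpha> * \<phi> (js ! \<alpha>) $ i) $ i"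
      unfolding sampled_state_def using i by (simp add: Omega_index[OF js i] a_def sum_distrib_left mult.assoc)
  qed (simp add: sampled_state_def)
  have "\<exists>(a :: nat \<Rightarrow> complex) (\<phi>' :: nat \<Rightarrow> complex vec). (\<forall>j<k. stabilizer_state n (\<phi>' j))
      \<and> sampled_state n c \<phi> m js = vec (qdim n) (\<lambda>i. \<Sum>j<k. a j * \<phi>' j $ i)"
    using stab_js sampled by (intro exI[of _ a] exI[of _ "\<lambda>\<alpha>. \<phi> (js ! \<alpha>)"] conjI)
  then show ?thesis unfolding stabilizer_rank_def by (rule Least_le)
qed

lemma rho1_minus_outer_index:
  assumes "\<psi> \<in> carrier_vec (qdim n)" "r < qdim n" "s < qdim n"
  shows "(rho1 n c \<phi> m k - outer \<psi> \<psi>) $$ (r, s) =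
    (\<Sum>js\<in>samples m k. complex_of_real (sample_prob c m js) *
      (sampled_state n c \<phi> m js $ r * cnj (sampled_state n c \<phi> m js $ s))) - \<psi> $ r * cnj (\<psi> $ s)"
  using assms unfolding rho1_def outer_def by simp

lemma rho1_minus_outer_carrier:
  "\<psi> \<in> carrier_vec (qdim n) \<Longrightarrow> rho1 n c \<phi> m k - outer \<psi> \<psi> \<in> carrier_mat (qdim n) (qdim n)"
  unfolding outer_def by (rule minus_carrier_mat) (simp add: rho1_def)

lemma hermitian_rho1_minus_outer:
  "\<psi> \<in> carrier_vec (qdim n) \<Longrightarrow> hermitian (rho1 n c \<phi> m k - outer \<psi> \<psi>)"
  by (rule hermitianI[OF rho1_minus_outer_carrier]) (simp_all add: rho1_minus_outer_index mult_ac)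

lemma trace_rho1_minus_outer_mult:
  assumes \<psi>: "\<psi> \<in> carrier_vec (qdim n)" and S: "S \<in> carrier_mat (qdim n) (qdim n)"
  shows "trace ((rho1 n c \<phi> m k - outer \<psi> \<psi>) * S) =
    (\<Sum>js\<in>samples m k. complex_of_real (sample_prob c m js) * quad_form S (sampled_state n c \<phi> m js))
      - quad_form S \<psi>"
proof -
  define N where "N = qdim n"
  define p where "p js = complex_of_real (sample_prob c m js)" for js
  define u where "u = sampled_state n c \<phi> m"
  have du: "dim_vec (u js) = N" for js by (simp add: u_def N_def sampled_state_def)
  define D where "D = rho1 n c \<phi> m k - outer \<psi> \<psi>"
  have D: "D \<in> carrier_mat N N" unfolding D_def N_def by (rule rho1_minus_outer_carrier[OF \<psi>])
  have "trace (D * S) = (\<Sum>r<N. \<Sum>s<N. D $$ (r, s) * S $$ (s, r))"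
    using D S unfolding N_def by (simp add: trace_def scalar_prod_def atLeast0LessThan)
  also have "\<dots> = (\<Sum>r<N. \<Sum>s<N. (\<Sum>js\<in>samples m k. p js * (u js $ r * cnj (u js $ s))) * S $$ (s, r)
        - \<psi> $ r * cnj (\<psi> $ s) * S $$ (s, r))"
    using \<psi> unfolding D_def N_def by (simp add: rho1_minus_outer_index p_def u_def left_diff_distrib)
  also have "\<dots> = (\<Sum>js\<in>samples m k. p js * quad_form S (u js)) - quad_form S \<psi>"
    using \<psi> du unfolding quad_form_def N_def[symmetric]
    by (simp add: N_def sum_subtractf sum_distrib_left sum_distrib_right sum.swap[of _ "samples m k"] mult_ac)
  finally show ?thesis unfolding D_def p_def u_def .
qed

lemma trace_norm_rho1_minus_outer_eq:
  assumes \<psi>: "\<psi> \<in> carrier_vec (qdim n)" and S: "S \<in> carrier_mat (qdim n) (qdim n)"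
    and trS: "trace ((rho1 n c \<phi> m k - outer \<psi> \<psi>) * S)
      = complex_of_real (trace_norm (rho1 n c \<phi> m k - outer \<psi> \<psi>))"
  shows "trace_norm (rho1 n c \<phi> m k - outer \<psi> \<psi>)
    = (\<Sum>js\<in>samples m k. sample_prob c m js *
        (Re (quad_form S (Omega n c \<phi> m js)) / (vnorm (Omega n c \<phi> m js))\<^sup>2))
      - Re (quad_form S \<psi>)"
proof -
  have sampled: "quad_form S (sampled_state n c \<phi> m js)
      = complex_of_real (1 / (vnorm (Omega n c \<phi> m js))\<^sup>2) * quad_form S (Omega n c \<phi> m js)" for js
    unfolding sampled_state_def quad_form_scale by (simp add: power_one_over)
  have "complex_of_real (trace_norm (rho1 n c \<phi> m k - outer \<psi> \<psi>))
      = (\<Sum>js\<in>samples m k. complex_of_real (sample_prob c m js) *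
          (complex_of_real (1 / (vnorm (Omega n c \<phi> m js))\<^sup>2) * quad_form S (Omega n c \<phi> m js)))
        - quad_form S \<psi>"
    unfolding trS[symmetric] sampled[symmetric] by (rule trace_rho1_minus_outer_mult[OF \<psi> S])
  from arg_cong[OF this, of Re] show ?thesis by simp
qed

text \<open>By the second-moment formula the left-hand side is
  \<open>(\<parallel>c\<parallel>\<^sub>1 \<Sum>\<^sub>j |c\<^sub>j| \<langle>\<phi>\<^sub>j|S|\<phi>\<^sub>j\<rangle> - \<langle>\<psi>|S|\<psi>\<rangle>) / k\<close>, and all these
  expectation values lie in \<open>[-1, 1]\<close>.\<close>

lemma expect_quad_form_Omega_minus_le:
  assumes k: "k \<ge> 1" and L: "l1_norm c m \<noteq> 0"
    and unit: "\<And>j. j < m \<Longrightarrow> dim_vec (\<phi> j) = qdim n \<and> vnorm (\<phi> j) = 1"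
    and \<psi>_norm: "vnorm (vec (qdim n) (\<lambda>i. \<Sum>j<m. c j * \<phi> j $ i)) = 1"
    and S: "hermitian S" "S \<in> carrier_mat (qdim n) (qdim n)" "S * S = 1\<^sub>m (qdim n)"
  shows "(\<Sum>js\<in>samples m k. sample_prob c m js * Re (quad_form S (Omega n c \<phi> m js)))
      - Re (quad_form S (vec (qdim n) (\<lambda>i. \<Sum>j<m. c j * \<phi> j $ i))) \<le> (1 + (l1_norm c m)\<^sup>2) / real k"
proof -
  define L where "L = l1_norm c m"
  define q\<psi> where "q\<psi> = Re (quad_form S (vec (qdim n) (\<lambda>i. \<Sum>j<m. c j * \<phi> j $ i)))"
  define q\<phi> where "q\<phi> j = Re (quad_form S (\<phi> j))" for j
  note bound = quad_form_involution_bound[OF S]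
  have k0: "real k > 0" using k by simp
  have "- q\<psi> \<le> 1"
    unfolding q\<psi>_def using bound[of "vec (qdim n) (\<lambda>i. \<Sum>j<m. c j * \<phi> j $ i)"] \<psi>_norm by simp
  have "(\<Sum>j<m. cmod (c j) * q\<phi> j) \<le> (\<Sum>j<m. cmod (c j))"
  proof (intro sum_mono)
    fix j assume "j \<in> {..<m}"
    then have "q\<phi> j \<le> 1" unfolding q\<phi>_def using bound[OF carrier_vecI, of "\<phi> j"] unit[of j] by simp
    then show "cmod (c j) * q\<phi> j \<le> cmod (c j)" by (simp add: mult_left_le)
  qed
  then have "L / real k * (\<Sum>j<m. cmod (c j) * q\<phi> j) \<le> L / real k * L"
    unfolding L_def l1_norm_def using k0 by (intro mult_left_mono) (auto simp: sum_nonneg)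
  moreover have "(\<Sum>js\<in>samples m k. sample_prob c m js * Re (quad_form S (Omega n c \<phi> m js)))
      = (1 - 1 / real k) * q\<psi> + L / real k * (\<Sum>j<m. cmod (c j) * q\<phi> j)"
    using arg_cong[where f = Re, OF expect_quad_form_Omega[OF k L conjunct1[OF unit], where S = S]]
    unfolding q\<psi>_def q\<phi>_def L_def by simp
  moreover have "(1 - 1 / real k) * q\<psi> - q\<psi> = - q\<psi> / real k"
    using k0 by (simp add: field_simps)
  moreover have "- q\<psi> / real k \<le> 1 / real k"
    using divide_right_mono[OF \<open>- q\<psi> \<le> 1\<close>, of "real k"] by simp
  moreover have "1 / real k + L / real k * L = (1 + L\<^sup>2) / real k"
    by (simp add: power2_eq_square add_divide_distrib)
  ultimately show ?thesis unfolding q\<psi>_def L_def by linarith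
qed

lemma trace_norm_rho1_minus_outer_le:
  assumes stab: "\<forall>j<m. stabilizer_state n (\<phi> j)"
    and \<psi>_def: "\<psi> = vec (qdim n) (\<lambda>i. \<Sum>j<m. c j * \<phi> j $ i)" and \<psi>_norm: "vnorm \<psi> = 1"
    and k: "k \<ge> 1"
  shows "trace_norm (rho1 n c \<phi> m k - outer \<psi> \<psi>) \<le> 2 * (l1_norm c m)\<^sup>2 / real k + sqrt (var_norm2 n c \<phi> m k)"
proof -
  define L where "L = l1_norm c m"
  define D where "D = rho1 n c \<phi> m k - outer \<psi> \<psi>"
  define p where "p = sample_prob c m"
  define X where "X js = (vnorm (Omega n c \<phi> m js))\<^sup>2" for js
  have unit: "dim_vec (\<phi> j) = qdim n \<and> vnorm (\<phi> j) = 1" if "j < m" for j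
  proof -
    have "stabilizer_state n (\<phi> j)" using stab that by blast
    then show ?thesis
      by (simp add: stabilizer_state_vnorm carrier_vecD[OF stabilizer_state_carrier])
  qed
  have \<psi>: "\<psi> \<in> carrier_vec (qdim n)" unfolding \<psi>_def by simp
  have "1 \<le> L"
    unfolding L_def using unit \<psi>_norm unfolding \<psi>_def by (rule l1_norm_ge_1)
  then have L: "l1_norm c m \<noteq> 0" unfolding L_def by simp
  have mean: "(\<Sum>js\<in>samples m k. p js * X js) = 1 + (L\<^sup>2 - 1) / real k"
    using expect_vnorm_sq_Omega[OF k L, of \<phi> n] unit \<psi>_norm k
    unfolding p_def X_def L_def \<psi>_def by (simp add: diff_divide_distrib)
  have "hermitian D" "D \<in> carrier_mat (qdim n) (qdim n)"
    unfolding D_def using \<psi>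
    by (simp_all add: hermitian_rho1_minus_outer rho1_minus_outer_carrier)
  then obtain S where S: "S \<in> carrier_mat (qdim n) (qdim n)" "hermitian S" "S * S = 1\<^sub>m (qdim n)"
    and trS: "trace (D * S) = complex_of_real (trace_norm D)"
    by (rule hermitian_sign_operator)
  define q where "q js = Re (quad_form S (Omega n c \<phi> m js))" for js
  have "trace_norm D = (\<Sum>js\<in>samples m k. p js * (q js / X js)) - Re (quad_form S \<psi>)"
    using trace_norm_rho1_minus_outer_eq[OF \<psi> S(1) trS[unfolded D_def]]
    unfolding D_def p_def q_def X_def by simp
  also have "(\<Sum>js\<in>samples m k. p js * (q js / X js))
      \<le> (\<Sum>js\<in>samples m k. p js * q js) + sqrt (var_norm2 n c \<phi> m k) + (L\<^sup>2 - 1) / real k"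
  proof -
    have "1 \<le> L\<^sup>2" using \<open>1 \<le> L\<close> by simp
    moreover have "\<bar>q js\<bar> \<le> X js" for js
      unfolding q_def X_def by (intro quad_form_involution_bound[OF S(2,1,3)] carrier_vecI) simp
    ultimately show ?thesis
      using expect_ratio_le[of "samples m k" p q X] sum_sample_prob[OF L] mean k
      unfolding var_norm2_def expect_def p_def X_def by (simp add: sample_prob_nonneg)
  qed
  also have "(\<Sum>js\<in>samples m k. p js * q js) - Re (quad_form S \<psi>) \<le> (1 + L\<^sup>2) / real k"
    using expect_quad_form_Omega_minus_le[OF k L unit \<psi>_norm[unfolded \<psi>_def] S(2,1,3)]
    unfolding p_def q_def L_def \<psi>_def by simp
  moreover have "(L\<^sup>2 - 1) / real k + (1 + L\<^sup>2) / real k = 2 * L\<^sup>2 / real k"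
    by (simp flip: add_divide_distrib)
  ultimately show ?thesis unfolding D_def L_def by linarith
qed

theorem lemma6:
  fixes n m k :: nat and c :: "nat \<Rightarrow> complex" and \<phi> :: "nat \<Rightarrow> complex vec"
    and \<psi> :: "complex vec"
  assumes stab: "\<forall>j<m. stabilizer_state n (\<phi> j)"
    and psi_def: "\<psi> = vec (qdim n) (\<lambda>i. \<Sum>j<m. c j * \<phi> j $ i)"
    and psi_norm: "vnorm \<psi> = 1"
    and k: "k \<ge> 1"
  shows "(\<forall>js\<in>samples m k. sample_prob c m js > 0 \<longrightarrow>
            stabilizer_rank n (sampled_state n c \<phi> m js) \<le> k)
       \<and> trace_norm (rho1 n c \<phi> m k - outer \<psi> \<psi>)
           \<le> 2 * (l1_norm c m)\<^sup>2 / real k + sqrt (var_norm2 n c \<phi> m k)"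
  using stabilizer_rank_sampled_state[OF stab] trace_norm_rho1_minus_outer_le[OF stab psi_def psi_norm k]
  by blast

end
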